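(* Let $(Y,\leq)$ be a partial order with $|Y|=\omega_1$. Then there is a cofinal subset $X\subseteq Y$ such that $(X,\leq)$ is well-founded and, for every $x\in X$, the set $(-\infty,x)_X=\{z\in X: z<x\}$ is countable.
   Context: A subset $X\subseteq Y$ is cofinal if for every $y\in Y$ there is $x\in X$ with $y\leq x$. *)

theory Defs
  imports Main "HOL-Library.Countable_Set"
begin

end

theory Submission
  imports Defs "HOL-Library.Countable_Set_Type"
begin

text \<open>Enumerate \<open>Y\<close> in order type \<open>\<omega>\<^sub>1\<close> and keep the points that lie below no earlier point.
  Every \<open>y\<close> lies below a kept point, namely the first point in the enumeration that is above \<open>y\<close>.
  If \<open>z < x\<close> are both kept, then \<open>z\<close> must come before \<open>x\<close> (otherwise \<open>z\<close> would lie below the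
  earlier point \<open>x\<close>), so the strict order on the kept points is contained in the enumeration
  order. Hence it is well-founded, and the predecessors of a kept point form a subset of a proper
  initial segment of \<open>\<omega>\<^sub>1\<close>, which is countable.\<close>

definition undominated :: "'a set \<Rightarrow> 'a rel \<Rightarrow> 'a rel \<Rightarrow> 'a set" where
  "undominated Y r R = {y \<in> Y. \<forall>z. (z, y) \<in> R \<longrightarrow> (y, z) \<notin> r}"

lemma undominated_subset: "undominated Y r R \<subseteq> Y"
  unfolding undominated_def by auto

lemma undominated_cofinal:
  assumes "preorder_on Y r" and "wf R" and "y \<in> Y"
  shows "\<exists>x\<in>undominated Y r R. (y, x) \<in> r"
proof -
  have r_Y: "r \<subseteq> Y \<times> Y" and "refl_on Y r" and "trans r"
    using assms(1) by (auto simp: preorder_on_def)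
  let ?above = "{z. (y, z) \<in> r}"
  have "y \<in> ?above"
    using \<open>refl_on Y r\<close> \<open>y \<in> Y\<close> by (auto simp: refl_on_def)
  then obtain x where x: "x \<in> ?above" and least: "\<And>z. (z, x) \<in> R \<Longrightarrow> z \<notin> ?above"
    using wfE_min[OF \<open>wf R\<close>] by metis
  have "(x, z) \<notin> r" if "(z, x) \<in> R" for z
    using least[OF that] x \<open>trans r\<close> by (auto dest: transD)
  with x r_Y have "x \<in> undominated Y r R"
    unfolding undominated_def by auto
  with x show ?thesis by auto
qed

lemma undominated_strict_below:
  assumes "total_on Y R"
    and "z \<in> undominated Y r R" and "x \<in> undominated Y r R"
    and "(z, x) \<in> r" and "z \<noteq> x"
  shows "(z, x) \<in> R"
proof (rule ccontr)
  assume "(z, x) \<notin> R"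
  moreover have "z \<in> Y" and "x \<in> Y"
    using assms(2,3) unfolding undominated_def by simp_all
  ultimately have "(x, z) \<in> R"
    using assms(1,5) unfolding total_on_def by metis
  with assms(2,4) show False
    unfolding undominated_def by auto
qed

lemma total_on_inv_image_Well_order:
  assumes "Well_order s" and "inj_on f Y" and "f ` Y \<subseteq> Field s"
  shows "total_on Y (inv_image (s - Id) f)"
proof -
  have "total_on (Field s) s"
    using assms(1) by (simp add: well_order_on_def linear_order_on_def)
  show ?thesis
    unfolding total_on_def
  proof (intro ballI impI)
    fix x y assume "x \<in> Y" "y \<in> Y" "x \<noteq> y"
    then have "f x \<noteq> f y" and "f x \<in> Field s" and "f y \<in> Field s"
      using assms(2,3) by (auto dest: inj_onD)
    with \<open>total_on (Field s) s\<close>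
    show "(x, y) \<in> inv_image (s - Id) f \<or> (y, x) \<in> inv_image (s - Id) f"
      unfolding total_on_def by auto
  qed
qed

lemma countable_underS_cardSuc_natLeq:
  assumes "a \<in> Field (cardSuc natLeq)"
  shows "countable (underS (cardSuc natLeq) a)"
proof -
  have "(card_of (underS (cardSuc natLeq) a), cardSuc natLeq) \<in> ordLess"
    using card_of_underS[OF cardSuc_Card_order[OF natLeq_Card_order] assms] .
  then show ?thesis
    unfolding countable_card_le_natLeq
    using cardSuc_ordLeq_ordLess[OF natLeq_Card_order card_of_Card_order] by blast
qed

lemma countable_below_inv_image:
  assumes "inj_on f A" and "countable (underS s (f x))"
  shows "countable {z \<in> A. (z, x) \<in> inv_image (s - Id) f}"
proof (rule countable_image_inj_on)
  have "f ` {z \<in> A. (z, x) \<in> inv_image (s - Id) f} \<subseteq> underS s (f x)"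
    unfolding underS_def by auto
  with assms(2) show "countable (f ` {z \<in> A. (z, x) \<in> inv_image (s - Id) f})"
    by (rule countable_subset[rotated])
  show "inj_on f {z \<in> A. (z, x) \<in> inv_image (s - Id) f}"
    using assms(1) by (rule inj_on_subset) auto
qed

lemma bij_betw_Field_cardSuc_natLeq:
  assumes "(card_of Y, cardSuc natLeq) \<in> ordIso"
  obtains f where "bij_betw f Y (Field (cardSuc natLeq))"
proof -
  have "Card_order (cardSuc natLeq)"
    by (simp add: cardSuc_Card_order natLeq_Card_order)
  then have "(card_of Y, card_of (Field (cardSuc natLeq))) \<in> ordIso"
    using ordIso_transitive[OF assms ordIso_symmetric[OF card_of_Field_ordIso]] by blast
  then show ?thesis
    using card_of_ordIso that by blast
qed

theorem mainTheorem1: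
  fixes Y :: "'a set" and r :: "'a rel"
  assumes "partial_order_on Y r"
    and "(card_of Y, cardSuc natLeq) \<in> ordIso"
  shows "\<exists>X. X \<subseteq> Y
    \<and> (\<forall>y\<in>Y. \<exists>x\<in>X. (y, x) \<in> r)
    \<and> wf {(z, x). z \<in> X \<and> x \<in> X \<and> (z, x) \<in> r \<and> z \<noteq> x}
    \<and> (\<forall>x\<in>X. countable {z \<in> X. (z, x) \<in> r \<and> z \<noteq> x})"
proof -
  define s where "s = cardSuc natLeq"
  obtain f where f: "bij_betw f Y (Field s)"
    using bij_betw_Field_cardSuc_natLeq[OF assms(2)] unfolding s_def .
  have "Well_order s"
    unfolding s_def using cardSuc_Card_order[OF natLeq_Card_order] by (simp add: card_order_on_def)
  define R where "R = inv_image (s - Id) f"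
  define X where "X = undominated Y r R"
  have "wf R"
    unfolding R_def using \<open>Well_order s\<close> by (simp add: well_order_on_def wf_inv_image)
  have "total_on Y R"
    unfolding R_def using \<open>Well_order s\<close>
    by (rule total_on_inv_image_Well_order) (use f in \<open>auto simp: bij_betw_def\<close>)
  have "X \<subseteq> Y"
    unfolding X_def by (rule undominated_subset)
  have strict_in_R: "{(z, x). z \<in> X \<and> x \<in> X \<and> (z, x) \<in> r \<and> z \<noteq> x} \<subseteq> R"
    unfolding X_def using undominated_strict_below[OF \<open>total_on Y R\<close>] by blast
  have "countable {z \<in> X. (z, x) \<in> r \<and> z \<noteq> x}" if "x \<in> X" for x
  proof (rule countable_subset)
    show "{z \<in> X. (z, x) \<in> r \<and> z \<noteq> x} \<subseteq> {z \<in> X. (z, x) \<in> R}"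
      using strict_in_R that by blast
    have "f x \<in> Field s"
      using f that \<open>X \<subseteq> Y\<close> unfolding bij_betw_def by blast
    then show "countable {z \<in> X. (z, x) \<in> R}"
      unfolding R_def s_def using f \<open>X \<subseteq> Y\<close>
      by (intro countable_below_inv_image countable_underS_cardSuc_natLeq)
        (auto simp: bij_betw_def intro: inj_on_subset)
  qed
  moreover have "\<exists>x\<in>X. (y, x) \<in> r" if "y \<in> Y" for y
    using assms(1) undominated_cofinal[OF _ \<open>wf R\<close> that]
    unfolding partial_order_on_def X_def by blast
  ultimately show ?thesis
    using \<open>X \<subseteq> Y\<close> wf_subset[OF \<open>wf R\<close> strict_in_R] by blast
qed

end
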